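(* Let $x$ be a $\theta$-cyclic point and let $U\subseteq V_n$ be a minimal critical cut of $G_x$, i.e. $U$ is a critical cut and no $S\subsetneq U$ is a critical cut of $G_x$. Then $G_x^U$ (with the point $x^U$) contains no critical cut.
   Context: $\mathrm{SUBT}(K_n)=\{x\in[0,1]^{E_n}: x(\delta(\{i\}))=2\ \forall i,\ x(\delta(U))\ge2\ \forall\,\emptyset\ne U\subsetneq V_n\}$ where $K_n$ is the complete graph on $V_n=\{1,\ldots,n\}$ with edge set $E_n$ and $\delta(U)$ is the set of edges with exactly one endpoint in $U$. $G_x=(V_n,E_x)$, $E_x=\{e:x_e>0\}$. A $\theta$-cyclic point ($0<\theta\le\frac12$) is $x\in\mathrm{SUBT}(K_n)\cap\{0,\theta,1-\theta,1\}^{E_n}$ with $G_x$ of maximum degree at most 3 and every vertex incident to an edge of $x$-value 1. A cut $U$ of a graph with vertex set $V$ is proper if $|U|\ge2$ and $|V\setminus U|\ge2$. A critical cut is a proper cut $U$ with $|\delta(U)|=3$, exactly one edge of $\delta(U)$ of $x$-value 1, and the edges of $\delta(U)$ having pairwise distinct endpoints in $U$ and pairwise distinct endpoints outside $U$. $G_x^U$ is obtained from $G_x$ by identifying all vertices of $V_n\setminus U$ into a single vertex $v_{\overline U}$ and deleting loops; $x^U$ assigns each edge of $G_x^U$ its $x$-value. *)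

theory Defs
  imports Complex_Main
begin

definition Vn :: "nat \<Rightarrow> nat set" where
  "Vn n = {1..n}"

definition En :: "nat \<Rightarrow> nat set set" where
  "En n = {{i, j} | i j. i \<in> Vn n \<and> j \<in> Vn n \<and> i \<noteq> j}"

definition deltaK :: "nat \<Rightarrow> nat set \<Rightarrow> nat set set" where
  "deltaK n U = {e \<in> En n. card (e \<inter> U) = 1}"

definition SUBT :: "nat \<Rightarrow> (nat set \<Rightarrow> real) set" where
  "SUBT n = {x. (\<forall>e \<in> En n. 0 \<le> x e \<and> x e \<le> 1)
              \<and> (\<forall>i \<in> Vn n. sum x (deltaK n {i}) = 2)
              \<and> (\<forall>U. U \<noteq> {} \<and> U \<subset> Vn n \<longrightarrow> sum x (deltaK n U) \<ge> 2)}"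

definition Ex :: "nat \<Rightarrow> (nat set \<Rightarrow> real) \<Rightarrow> nat set set" where
  "Ex n x = {e \<in> En n. x e > 0}"

definition theta_cyclic :: "nat \<Rightarrow> real \<Rightarrow> (nat set \<Rightarrow> real) \<Rightarrow> bool" where
  "theta_cyclic n \<theta> x \<longleftrightarrow>
     0 < \<theta> \<and> \<theta> \<le> 1/2 \<and> x \<in> SUBT n
     \<and> (\<forall>e \<in> En n. x e \<in> {0, \<theta>, 1 - \<theta>, 1})
     \<and> (\<forall>i \<in> Vn n. card {e \<in> Ex n x. i \<in> e} \<le> 3)
     \<and> (\<forall>i \<in> Vn n. \<exists>e \<in> En n. i \<in> e \<and> x e = 1)"

text \<open>A (loopless) multigraph is given by a vertex set V, an abstract edge set F and an
  endpoint map ep assigning to each edge its set of (two) endpoints; w is an edge weighting.\<close>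

definition cut_edges :: "'e set \<Rightarrow> ('e \<Rightarrow> 'v set) \<Rightarrow> 'v set \<Rightarrow> 'e set" where
  "cut_edges F ep S = {e \<in> F. ep e \<inter> S \<noteq> {} \<and> ep e - S \<noteq> {}}"

definition proper_cut :: "'v set \<Rightarrow> 'v set \<Rightarrow> bool" where
  "proper_cut V S \<longleftrightarrow> S \<subseteq> V \<and> card S \<ge> 2 \<and> card (V - S) \<ge> 2"

definition critical_cut ::
  "'v set \<Rightarrow> 'e set \<Rightarrow> ('e \<Rightarrow> 'v set) \<Rightarrow> ('e \<Rightarrow> real) \<Rightarrow> 'v set \<Rightarrow> bool" where
  "critical_cut V F ep w S \<longleftrightarrow>
     proper_cut V S
     \<and> card (cut_edges F ep S) = 3
     \<and> card {e \<in> cut_edges F ep S. w e = 1} = 1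
     \<and> (\<forall>e \<in> cut_edges F ep S. \<forall>f \<in> cut_edges F ep S. e \<noteq> f \<longrightarrow>
           ep e \<inter> ep f \<inter> S = {} \<and> (ep e \<inter> ep f) - S = {})"

text \<open>Critical cut of G_x (vertices V_n, edges E_x, an edge is its own endpoint set).\<close>
definition critical_cut_Gx :: "nat \<Rightarrow> (nat set \<Rightarrow> real) \<Rightarrow> nat set \<Rightarrow> bool" where
  "critical_cut_Gx n x S = critical_cut (Vn n) (Ex n x) id x S"

text \<open>Vertices of G_x^U: Some u for u in U, and None for the contracted vertex v_{bar U}.\<close>
definition contr_map :: "nat set \<Rightarrow> nat \<Rightarrow> nat option" where
  "contr_map U v = (if v \<in> U then Some v else None)"

definition contr_V :: "nat set \<Rightarrow> nat option set" where
  "contr_V U = Some ` U \<union> {None}"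

text \<open>Edges of G_x^U: edges of G_x with at least one endpoint in U (edges with both ends
  outside U become loops and are deleted); parallel edges are kept.\<close>
definition contr_E :: "nat \<Rightarrow> (nat set \<Rightarrow> real) \<Rightarrow> nat set \<Rightarrow> nat set set" where
  "contr_E n x U = {e \<in> Ex n x. e \<inter> U \<noteq> {}}"

definition contr_ep :: "nat set \<Rightarrow> nat set \<Rightarrow> nat option set" where
  "contr_ep U e = contr_map U ` e"

definition critical_cut_GxU :: "nat \<Rightarrow> (nat set \<Rightarrow> real) \<Rightarrow> nat set \<Rightarrow> nat option set \<Rightarrow> bool" where
  "critical_cut_GxU n x U S = critical_cut (contr_V U) (contr_E n x U) (contr_ep U) x S"

end

theory Submission
  imports Defs "HOL-Library.Disjoint_Sets"
begin

text \<open>A critical cut of the contracted graph G_x^U may be replaced by its complement, so it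
  can be assumed not to contain the contracted vertex. It then consists of vertices of U only,
  and since contraction does not change which edges cross it, it is a critical cut of G_x
  lying strictly inside U, contradicting the minimality of U.\<close>

lemma critical_cut_iff_disjoint_family:
  "critical_cut V F ep w S \<longleftrightarrow>
     proper_cut V S \<and> card (cut_edges F ep S) = 3 \<and> card {e \<in> cut_edges F ep S. w e = 1} = 1
     \<and> disjoint_family_on ep (cut_edges F ep S)"
  unfolding critical_cut_def disjoint_family_on_def by blast

lemma cut_edges_Diff:
  assumes "\<forall>e\<in>F. ep e \<subseteq> V"
  shows "cut_edges F ep (V - S) = cut_edges F ep S"
  using assms unfolding cut_edges_def by blast

lemma proper_cut_Diff:
  assumes "proper_cut V S"
  shows "proper_cut V (V - S)"
proof -
  have "V - (V - S) = S" using assms unfolding proper_cut_def by blast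
  then show ?thesis using assms unfolding proper_cut_def by auto
qed

lemma critical_cut_Diff:
  assumes "critical_cut V F ep w S" and "\<forall>e\<in>F. ep e \<subseteq> V"
  shows "critical_cut V F ep w (V - S)"
  using assms proper_cut_Diff[of V S]
  by (simp add: critical_cut_iff_disjoint_family cut_edges_Diff)

lemma contr_map_in_Some_image:
  "T \<subseteq> U \<Longrightarrow> contr_map U v \<in> Some ` T \<longleftrightarrow> v \<in> T"
  unfolding contr_map_def by auto

lemma contr_ep_subset_contr_V: "\<forall>e\<in>contr_E n x U. contr_ep U e \<subseteq> contr_V U"
  unfolding contr_ep_def contr_V_def contr_map_def by auto

lemma cut_edges_contr:
  assumes "T \<subseteq> U"
  shows "cut_edges (contr_E n x U) (contr_ep U) (Some ` T) = cut_edges (Ex n x) id T"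
proof -
  have "contr_ep U e \<inter> Some ` T \<noteq> {} \<longleftrightarrow> e \<inter> T \<noteq> {}"
    and "contr_ep U e - Some ` T \<noteq> {} \<longleftrightarrow> e - T \<noteq> {}" for e
    using contr_map_in_Some_image[OF assms] unfolding contr_ep_def by blast+
  then show ?thesis
    using assms unfolding cut_edges_def contr_E_def by auto
qed

lemma critical_cut_GxU_avoiding_contracted_vertex:
  assumes "critical_cut_GxU n x U S"
  obtains T where "T \<subseteq> U" and "critical_cut_GxU n x U (Some ` T)"
proof -
  define S' where "S' = (if None \<in> S then contr_V U - S else S)"
  have crit: "critical_cut_GxU n x U S'"
    using assms critical_cut_Diff[OF _ contr_ep_subset_contr_V]
    unfolding S'_def critical_cut_GxU_def by simp
  then have "S' \<subseteq> Some ` U"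
    unfolding S'_def critical_cut_GxU_def critical_cut_def proper_cut_def contr_V_def
    by (auto split: if_splits)
  then have "Some ` (Some -` S') = S'" and "Some -` S' \<subseteq> U" by auto
  with crit show ?thesis by (intro that[of "Some -` S'"]) simp_all
qed

lemma proper_cut_of_proper_cut_contr:
  assumes "proper_cut (Vn n) U" and "T \<subseteq> U" and "proper_cut (contr_V U) (Some ` T)"
  shows "T \<subset> U" and "proper_cut (Vn n) T"
proof -
  have "contr_V U - Some ` T = insert None (Some ` (U - T))"
    unfolding contr_V_def by auto
  with assms(3) have "card (insert None (Some ` (U - T))) \<ge> 2"
    unfolding proper_cut_def by simp
  then have "U - T \<noteq> {}" by (cases "U - T = {}") simp_all
  with assms(2) show "T \<subset> U" by blast
  have "card (Vn n - U) \<le> card (Vn n - T)"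
    using assms(2) by (intro card_mono) (auto simp: Vn_def)
  moreover have "card T \<ge> 2"
    using assms(3) unfolding proper_cut_def by (simp add: card_image)
  ultimately show "proper_cut (Vn n) T"
    using assms(1,2) unfolding proper_cut_def by auto
qed

lemma disjoint_family_on_contr_ep:
  "disjoint_family_on (contr_ep U) C \<Longrightarrow> disjoint_family_on id C"
  unfolding disjoint_family_on_def contr_ep_def id_apply
  by (metis disjoint_iff image_eqI)

lemma critical_cut_Gx_of_critical_cut_GxU:
  assumes "proper_cut (Vn n) U" and "T \<subseteq> U" and "critical_cut_GxU n x U (Some ` T)"
  shows "T \<subset> U" and "critical_cut_Gx n x T"
proof -
  have "proper_cut (contr_V U) (Some ` T)"
    using assms(3) unfolding critical_cut_GxU_def critical_cut_def by blast
  with assms(1,2) have "T \<subset> U" and pc: "proper_cut (Vn n) T"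
    by (rule proper_cut_of_proper_cut_contr)+
  then show "T \<subset> U" by blast
  show "critical_cut_Gx n x T"
    using assms(3) pc
    unfolding critical_cut_Gx_def critical_cut_GxU_def critical_cut_iff_disjoint_family
      cut_edges_contr[OF assms(2)]
    by (auto intro: disjoint_family_on_contr_ep)
qed

theorem mainTheorem11:
  fixes n :: nat and \<theta> :: real and x :: "nat set \<Rightarrow> real" and U :: "nat set"
  assumes "theta_cyclic n \<theta> x"
    and "critical_cut_Gx n x U"
    and "\<forall>S. S \<subset> U \<longrightarrow> \<not> critical_cut_Gx n x S"
  shows "\<not> (\<exists>S. critical_cut_GxU n x U S)"
proof
  assume "\<exists>S. critical_cut_GxU n x U S"
  then obtain T where "T \<subseteq> U" and "critical_cut_GxU n x U (Some ` T)"
    using critical_cut_GxU_avoiding_contracted_vertex by metis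
  moreover have "proper_cut (Vn n) U"
    using assms(2) unfolding critical_cut_Gx_def critical_cut_def by blast
  ultimately have "T \<subset> U" and "critical_cut_Gx n x T"
    using critical_cut_Gx_of_critical_cut_GxU by blast+
  with assms(3) show False by blast
qed

end
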